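(* Let $P=P(G,[\omega])$ be a toric poset and $I\subseteq V$. Then $I$ is a toric filter of $P$ if and only if its characteristic vector $\chi_I\in\{0,1\}^V\subseteq\mathbb{R}^V$ is a vertex of the order polytope $\mathcal{O}(P(G,\omega'))$ for some $\omega'\in[\omega]$.
   Context: Toric poset setup: $V=[n]$; $\mathrm{Acyc}(G)$ acyclic orientations; $P(G,\omega)$ the poset given by the transitive closure of $\omega$; $[\omega]$ the class under the equivalence generated by converting a source into a sink; toric chambers (components of $\mathbb{R}^V/\mathbb{Z}^V$ minus the hyperplanes $\{x_i\equiv x_j\bmod 1\}$, $\{i,j\}\in E$) correspond bijectively to classes $[\omega]$; $P(G,[\omega])$ is identified with its chamber $c(P)$. $D^{\mathrm{tor}}_\pi$ is the image in the torus of $\{x\in\mathbb{R}^V:x_i=x_j$ for $i,j$ in a common block of $\pi\}$. Toric filter: $I=\emptyset$, $I=V$, or $\emptyset\ne I\ne V$ with $\overline{c(P)}\cap D^{\mathrm{tor}}_{\{I,V\setminus I\}}$ two-dimensional. Order polytope: $\mathcal{O}(Q)=\{x\in[0,1]^V: x_i\le x_j$ whenever $i\le_Q j\}$. $\chi_I(k)=1$ if $k\in I$ and $0$ otherwise. *)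

theory Defs
  imports "HOL-Analysis.Analysis"
begin

text \<open>Vertex set V is the finite type 'n (so V = UNIV, n = CARD('n)); R^V is real^'n.
A simple graph G is a symmetric irreflexive edge relation E.\<close>

definition simple_graph :: "('n \<times> 'n) set \<Rightarrow> bool" where
  "simple_graph E \<longleftrightarrow> sym E \<and> irrefl E"

definition is_orientation :: "('n \<times> 'n) set \<Rightarrow> ('n \<times> 'n) set \<Rightarrow> bool" where
  "is_orientation E \<omega> \<longleftrightarrow> \<omega> \<subseteq> E \<and>
     (\<forall>i j. (i, j) \<in> E \<longrightarrow> ((i, j) \<in> \<omega> \<longleftrightarrow> (j, i) \<notin> \<omega>))"

definition Acyc :: "('n \<times> 'n) set \<Rightarrow> ('n \<times> 'n) set set" where
  "Acyc E = {\<omega>. is_orientation E \<omega> \<and> acyclic \<omega>}"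

definition is_source :: "('n \<times> 'n) set \<Rightarrow> 'n \<Rightarrow> bool" where
  "is_source \<omega> v \<longleftrightarrow> (\<forall>u. (u, v) \<notin> \<omega>)"

definition flip_at :: "('n \<times> 'n) set \<Rightarrow> 'n \<Rightarrow> ('n \<times> 'n) set" where
  "flip_at \<omega> v = {(a, b). (a, b) \<in> \<omega> \<and> a \<noteq> v \<and> b \<noteq> v} \<union> {(b, a). (a, b) \<in> \<omega> \<and> (a = v \<or> b = v)}"

definition source_sink_step :: "(('n \<times> 'n) set \<times> ('n \<times> 'n) set) set" where
  "source_sink_step = {(\<omega>, \<omega>'). \<exists>v. is_source \<omega> v \<and> \<omega>' = flip_at \<omega> v}"

definition toric_class :: "('n \<times> 'n) set \<Rightarrow> ('n \<times> 'n) set set" where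
  "toric_class \<omega> = {\<omega>'. (\<omega>, \<omega>') \<in> (source_sink_step \<union> source_sink_step\<inverse>)\<^sup>*}"

definition order_polytope :: "('n \<times> 'n) set \<Rightarrow> (real ^ 'n) set" where
  "order_polytope \<omega> = {x. (\<forall>i. 0 \<le> x $ i \<and> x $ i \<le> 1) \<and> (\<forall>i j. (i, j) \<in> \<omega>\<^sup>* \<longrightarrow> x $ i \<le> x $ j)}"

definition char_vec :: "'n::finite set \<Rightarrow> real ^ 'n" where
  "char_vec I = (\<chi> k. if k \<in> I then 1 else 0)"

text \<open>Orientation \<omega>(x) induced by a point x of the torus off the toric arrangement
(via fractional parts of a lift), as in Develin--Macauley--Reiner.\<close>
definition point_orientation :: "('n \<times> 'n) set \<Rightarrow> real ^ 'n \<Rightarrow> ('n \<times> 'n) set" where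
  "point_orientation E x = {(i, j). (i, j) \<in> E \<and> frac (x $ i) < frac (x $ j)}"

text \<open>Preimage in R^V of the toric chamber c(P(G,[\<omega>])) under R^V \<rightarrow> R^V/Z^V.\<close>
definition toric_chamber_lift :: "('n \<times> 'n) set \<Rightarrow> ('n \<times> 'n) set \<Rightarrow> (real ^ 'n) set" where
  "toric_chamber_lift E \<omega> = {x. (\<forall>i j. (i, j) \<in> E \<longrightarrow> frac (x $ i) \<noteq> frac (x $ j)) \<and>
                              point_orientation E x \<in> toric_class \<omega>}"

text \<open>Preimage in R^V of D^tor_{I, V-I}.\<close>
definition D_tor_lift :: "'n::finite set \<Rightarrow> (real ^ 'n) set" where
  "D_tor_lift I = {x. \<forall>i j. (i \<in> I \<longleftrightarrow> j \<in> I) \<longrightarrow> x $ i - x $ j \<in> \<int>}"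

definition has_dim :: "'a::euclidean_space set \<Rightarrow> int \<Rightarrow> bool" where
  "has_dim S d \<longleftrightarrow> (\<exists>C. convex C \<and> C \<subseteq> S \<and> aff_dim C = d) \<and>
                   (\<forall>C. convex C \<and> C \<subseteq> S \<longrightarrow> aff_dim C \<le> d)"

definition toric_filter :: "('n::finite \<times> 'n) set \<Rightarrow> ('n \<times> 'n) set \<Rightarrow> 'n set \<Rightarrow> bool" where
  "toric_filter E \<omega> I \<longleftrightarrow> I = {} \<or> I = UNIV \<or>
     (I \<noteq> {} \<and> I \<noteq> UNIV \<and> has_dim (closure (toric_chamber_lift E \<omega>) \<inter> D_tor_lift I) 2)"

end

theory Submission
  imports Defs
begin

(* Orientations are read off from heights g :: 'n => real that are injective along edges and vary
   by less than 1 along them, via i -> j iff g i < g j.  Every acyclic orientation arises this way,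
   and adding 1 at a source is exactly a source-to-sink flip, so the whole toric class [omega] consists
   of such orientations; raising by 1 all heights on a set S whose boundary edges all point out of S
   is a sequence of such flips.  Being a vertex of the unit cube, chi_I is a vertex of the order
   polytope of omega' iff it lies in it, i.e. iff I is an up-set of omega'.

   If I is an up-set of omega' = omega(g), then every point a chi_I + b chi_(V-I) with 0 < b < a < 1
   is the limit as t -> 0+ of the chamber points a chi_I + b chi_(V-I) + t g, which gives a triangle in
   the closed chamber inside D^tor_{I,V-I}; convex subsets of D^tor_{I,V-I} have dimension at most 2
   because their difference vectors are constant on I and on V-I.  Conversely, a 2-dimensional
   convex piece contains a point z whose fractional parts are a constant alpha on I and a different
   constant beta off I, both non-zero.  A chamber point near z yields heights near alpha on I and near
   beta off I, so all edges between I and V-I point the same way: into I (I is an up-set) or out of I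
   (then lift I by 1). *)

section \<open>Orientations induced by heights\<close>

definition height_orientation :: "('n \<times> 'n) set \<Rightarrow> ('n \<Rightarrow> real) \<Rightarrow> ('n \<times> 'n) set" where
  "height_orientation E g = {(i, j). (i, j) \<in> E \<and> g i < g j}"

definition admissible_height :: "('n \<times> 'n) set \<Rightarrow> ('n \<Rightarrow> real) \<Rightarrow> bool" where
  "admissible_height E g \<longleftrightarrow> (\<forall>i j. (i, j) \<in> E \<longrightarrow> g i \<noteq> g j \<and> \<bar>g i - g j\<bar> < 1)"

definition realizable_orientations :: "('n \<times> 'n) set \<Rightarrow> ('n \<times> 'n) set set" where
  "realizable_orientations E = {height_orientation E g | g. admissible_height E g}"

lemma flip_at_flip_at [simp]: "flip_at (flip_at \<omega> v) v = \<omega>"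
  by (auto simp: flip_at_def)

lemma flip_at_converse: "flip_at (\<omega>\<inverse>) v = (flip_at \<omega> v)\<inverse>"
  by (auto simp: flip_at_def)

lemma height_orientation_uminus:
  assumes "sym E"
  shows "height_orientation E (\<lambda>i. - g i) = (height_orientation E g)\<inverse>"
  using assms by (auto simp: height_orientation_def sym_def)

lemma admissible_height_uminus: "admissible_height E (\<lambda>i. - g i) \<longleftrightarrow> admissible_height E g"
  by (auto simp: admissible_height_def abs_minus_commute)

lemma flip_at_source_height_orientation:
  assumes "sym E" "irrefl E" "admissible_height E g" "is_source (height_orientation E g) v"
  shows "flip_at (height_orientation E g) v = height_orientation E (g(v := g v + 1))"
    and "admissible_height E (g(v := g v + 1))"
proof -
  have sE: "(a, b) \<in> E \<longleftrightarrow> (b, a) \<in> E" for a b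
    using assms(1) by (auto simp: sym_def)
  have nbr: "g v < g u \<and> g u < g v + 1" if "(u, v) \<in> E" for u
    using assms(3,4) that sE by (force simp: admissible_height_def is_source_def height_orientation_def)
  have "(v, v) \<notin> E"
    using assms(2) by (simp add: irrefl_def)
  then show "flip_at (height_orientation E g) v = height_orientation E (g(v := g v + 1))"
    unfolding set_eq_iff
  proof (clarify)
    fix a b
    from \<open>(v, v) \<notin> E\<close> sE[of a b] nbr[of a] nbr[of b]
    show "(a, b) \<in> flip_at (height_orientation E g) v \<longleftrightarrow> (a, b) \<in> height_orientation E (g(v := g v + 1))"
      by (auto simp: flip_at_def height_orientation_def)
  qed
  show "admissible_height E (g(v := g v + 1))"
    using nbr sE assms(3) by (fastforce simp: admissible_height_def)
qed

lemma flip_at_sink_height_orientation: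
  assumes "sym E" "irrefl E" "admissible_height E g" "is_source ((height_orientation E g)\<inverse>) v"
  shows "flip_at (height_orientation E g) v = height_orientation E (g(v := g v - 1))"
    and "admissible_height E (g(v := g v - 1))"
proof -
  let ?h = "\<lambda>i. - g i"
  have h: "admissible_height E ?h" "is_source (height_orientation E ?h) v"
    using assms by (simp_all add: admissible_height_uminus height_orientation_uminus)
  have eq: "(\<lambda>i. - (g(v := g v - 1)) i) = ?h(v := ?h v + 1)"
    by auto
  show "flip_at (height_orientation E g) v = height_orientation E (g(v := g v - 1))"
    using flip_at_source_height_orientation(1)[OF assms(1,2) h]
    by (metis eq assms(1) converse_converse flip_at_converse height_orientation_uminus)
  show "admissible_height E (g(v := g v - 1))"
    using flip_at_source_height_orientation(2)[OF assms(1,2) h]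
    by (metis eq admissible_height_uminus)
qed

lemma source_sink_step_realizable_iff:
  assumes "sym E" "irrefl E" "(\<omega>1, \<omega>2) \<in> source_sink_step"
  shows "\<omega>1 \<in> realizable_orientations E \<longleftrightarrow> \<omega>2 \<in> realizable_orientations E"
proof -
  obtain v where src: "is_source \<omega>1 v" and \<omega>2: "\<omega>2 = flip_at \<omega>1 v"
    using assms(3) by (auto simp: source_sink_step_def)
  have sink: "is_source (\<omega>2\<inverse>) v"
    using src by (auto simp: \<omega>2 is_source_def flip_at_def)
  show ?thesis
  proof
    assume "\<omega>1 \<in> realizable_orientations E"
    then obtain g where "admissible_height E g" "\<omega>1 = height_orientation E g"
      by (auto simp: realizable_orientations_def)
    then show "\<omega>2 \<in> realizable_orientations E"
      using flip_at_source_height_orientation[OF assms(1,2)] src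
      by (auto simp: \<omega>2 realizable_orientations_def)
  next
    assume "\<omega>2 \<in> realizable_orientations E"
    then obtain g where "admissible_height E g" "\<omega>2 = height_orientation E g"
      by (auto simp: realizable_orientations_def)
    moreover have "\<omega>1 = flip_at \<omega>2 v"
      by (simp add: \<omega>2)
    ultimately show "\<omega>1 \<in> realizable_orientations E"
      using flip_at_sink_height_orientation[OF assms(1,2)] sink
      by (auto simp: realizable_orientations_def)
  qed
qed

lemma toric_class_realizable:
  assumes "sym E" "irrefl E" "\<omega> \<in> realizable_orientations E" "\<omega>' \<in> toric_class \<omega>"
  shows "\<omega>' \<in> realizable_orientations E"
proof -
  have "(\<omega>, \<omega>') \<in> (source_sink_step \<union> source_sink_step\<inverse>)\<^sup>*"
    using assms(4) by (simp add: toric_class_def)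
  then show ?thesis
    by induction (use assms(3) source_sink_step_realizable_iff[OF assms(1,2)] in blast)+
qed

lemma toric_class_source_sink_steps:
  assumes "\<omega>' \<in> toric_class \<omega>" "(\<omega>', \<omega>'') \<in> source_sink_step\<^sup>*"
  shows "\<omega>'' \<in> toric_class \<omega>"
proof -
  have "(\<omega>', \<omega>'') \<in> (source_sink_step \<union> source_sink_step\<inverse>)\<^sup>*"
    using assms(2) by (rule rtrancl_mono[THEN subsetD, rotated]) blast
  with assms(1) show ?thesis
    by (auto simp: toric_class_def)
qed

lemma Acyc_realizable:
  fixes E :: "('n::finite \<times> 'n) set"
  assumes "\<omega> \<in> Acyc E"
  shows "\<omega> \<in> realizable_orientations E"
proof -
  have orient: "\<omega> \<subseteq> E" "\<And>i j. (i, j) \<in> E \<Longrightarrow> (i, j) \<in> \<omega> \<longleftrightarrow> (j, i) \<notin> \<omega>"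
    and "acyclic \<omega>"
    using assms by (auto simp: Acyc_def is_orientation_def)
  define g where "g i = real (card {j. (j, i) \<in> \<omega>\<^sup>+}) / real (CARD('n) + 1)" for i
  have g_bounds: "0 \<le> g i \<and> g i < 1" for i
  proof -
    have "card {j. (j, i) \<in> \<omega>\<^sup>+} \<le> CARD('n)"
      by (rule card_mono) auto
    then show ?thesis
      by (simp add: g_def field_simps)
  qed
  have g_mono: "g i < g j" if "(i, j) \<in> \<omega>" for i j
  proof -
    have "{k. (k, i) \<in> \<omega>\<^sup>+} \<subset> {k. (k, j) \<in> \<omega>\<^sup>+}"
      using that \<open>acyclic \<omega>\<close> by (auto simp: acyclic_def intro: trancl_into_trancl)
    then have "card {k. (k, i) \<in> \<omega>\<^sup>+} < card {k. (k, j) \<in> \<omega>\<^sup>+}"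
      by (simp add: psubset_card_mono)
    then show ?thesis
      by (simp add: g_def divide_strict_right_mono)
  qed
  have "admissible_height E g"
    unfolding admissible_height_def
    using g_bounds g_mono orient(2) by (smt (verit))
  moreover have "\<omega> = height_orientation E g"
    using orient g_mono by (fastforce simp: height_orientation_def)
  ultimately show ?thesis
    by (auto simp: realizable_orientations_def)
qed

lemma source_sink_steps_lift:
  fixes E :: "('n::finite \<times> 'n) set"
  assumes "sym E" "irrefl E" "admissible_height E g"
    and "\<And>i j. (i, j) \<in> E \<Longrightarrow> i \<in> S \<Longrightarrow> j \<notin> S \<Longrightarrow> g i < g j"
  shows "(height_orientation E g, height_orientation E (\<lambda>k. g k + indicator S k))
           \<in> source_sink_step\<^sup>*"
  using finite[of S] assms(3,4)
proof (induction S arbitrary: g rule: finite_remove_induct)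
  case empty
  then show ?case by simp
next
  case (remove S)
  define v where "v = arg_min_on g S"
  have "v \<in> S"
    unfolding v_def by (rule arg_min_if_finite(1)[OF remove.hyps(1,2)])
  have v_min: "g v \<le> g w" if "w \<in> S" for w
    unfolding v_def by (rule arg_min_least[OF remove.hyps(1,2) that])
  have "is_source (height_orientation E g) v"
    unfolding is_source_def height_orientation_def
  proof clarify
    fix u assume "(u, v) \<in> E" "g u < g v"
    moreover have "(v, u) \<in> E"
      using \<open>(u, v) \<in> E\<close> assms(1) by (simp add: sym_def)
    ultimately show False
      using v_min remove.prems(2) \<open>v \<in> S\<close> by (cases "u \<in> S") fastforce+
  qed
  note flip = flip_at_source_height_orientation[OF assms(1,2) remove.prems(1) this]
  let ?g' = "g(v := g v + 1)"
  have "(height_orientation E g, height_orientation E ?g') \<in> source_sink_step"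
    using \<open>is_source (height_orientation E g) v\<close> flip(1) by (auto simp: source_sink_step_def)
  moreover have "(height_orientation E ?g', height_orientation E (\<lambda>k. ?g' k + indicator (S - {v}) k))
                   \<in> source_sink_step\<^sup>*"
  proof (rule remove.IH[OF \<open>v \<in> S\<close> flip(2)])
    fix i j assume ij: "(i, j) \<in> E" and "i \<in> S - {v}" "j \<notin> S - {v}"
    moreover have "\<bar>g i - g j\<bar> < 1"
      using remove.prems(1) ij by (simp add: admissible_height_def)
    ultimately show "?g' i < ?g' j"
      using remove.prems(2)[OF ij] by (cases "j = v") auto
  qed
  moreover have "(\<lambda>k. ?g' k + indicator (S - {v}) k) = (\<lambda>k. g k + indicator S k)"
    using \<open>v \<in> S\<close> by (auto simp: indicator_def)
  ultimately show ?case
    by (simp add: converse_rtrancl_into_rtrancl)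
qed

section \<open>Vertices of the order polytope\<close>

definition upward_closed :: "('n \<times> 'n) set \<Rightarrow> 'n set \<Rightarrow> bool" where
  "upward_closed \<omega> I \<longleftrightarrow> (\<forall>i j. (i, j) \<in> \<omega> \<longrightarrow> i \<in> I \<longrightarrow> j \<in> I)"

lemma char_vec_nth [simp]: "char_vec I $ k = (if k \<in> I then 1 else 0)"
  by (simp add: char_vec_def)

lemma upward_closed_rtrancl:
  assumes "upward_closed \<omega> I" "(i, j) \<in> \<omega>\<^sup>*" "i \<in> I"
  shows "j \<in> I"
  using assms(2,3) by induction (use assms(1) in \<open>auto simp: upward_closed_def\<close>)

lemma char_vec_in_order_polytope_iff:
  "char_vec I \<in> order_polytope \<omega> \<longleftrightarrow> upward_closed \<omega> I"
proof
  assume "char_vec I \<in> order_polytope \<omega>"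
  then show "upward_closed \<omega> I"
    by (force simp: order_polytope_def upward_closed_def split: if_splits)
next
  assume "upward_closed \<omega> I"
  then show "char_vec I \<in> order_polytope \<omega>"
    by (auto simp: order_polytope_def dest: upward_closed_rtrancl)
qed

lemma convex_comb_in_zero_one_imp_eq:
  fixes a b u :: real
  assumes "0 < u" "u < 1" "a \<in> {0..1}" "b \<in> {0..1}" "(1 - u) * a + u * b \<in> {0, 1}"
  shows "a = b"
proof -
  have bounds: "0 \<le> (1 - u) * a" "(1 - u) * a \<le> 1 - u" "0 \<le> u * b" "u * b \<le> u"
    using assms by (auto intro: mult_left_le)
  from assms(5) consider "(1 - u) * a + u * b = 0" | "(1 - u) * a + u * b = 1"
    by auto
  then show ?thesis
  proof cases
    case 1
    then have "(1 - u) * a = 0" "u * b = 0"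
      using bounds by linarith+
    with assms(1,2) show ?thesis by simp
  next
    case 2
    then have "(1 - u) * a = 1 - u" "u * b = u"
      using bounds by linarith+
    with assms(1,2) show ?thesis by simp
  qed
qed

lemma char_vec_extreme_point_of_unit_cube:
  assumes "char_vec I \<in> S" "S \<subseteq> {x. \<forall>i. x $ i \<in> {0..1}}"
  shows "char_vec I extreme_point_of S"
  unfolding extreme_point_of_def
proof (intro conjI ballI assms(1) notI)
  fix a b assume "a \<in> S" "b \<in> S" "char_vec I \<in> open_segment a b"
  then obtain u where "a \<noteq> b" "0 < u" "u < 1" and comb: "char_vec I = (1 - u) *\<^sub>R a + u *\<^sub>R b"
    and "\<forall>i. a $ i \<in> {0..1}" "\<forall>i. b $ i \<in> {0..1}"
    using assms(2) by (auto simp: in_segment)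
  moreover have "(1 - u) * a $ i + u * b $ i \<in> {0, 1}" for i
    using arg_cong[OF comb, of "\<lambda>x. x $ i"] by (simp split: if_splits)
  ultimately show False
    using convex_comb_in_zero_one_imp_eq by (metis vec_eq_iff)
qed

lemma char_vec_extreme_point_of_order_polytope_iff:
  "char_vec I extreme_point_of order_polytope \<omega> \<longleftrightarrow> upward_closed \<omega> I"
proof
  assume "char_vec I extreme_point_of order_polytope \<omega>"
  then show "upward_closed \<omega> I"
    by (simp add: extreme_point_of_def char_vec_in_order_polytope_iff)
next
  assume "upward_closed \<omega> I"
  then have "char_vec I \<in> order_polytope \<omega>"
    by (simp add: char_vec_in_order_polytope_iff)
  then show "char_vec I extreme_point_of order_polytope \<omega>"
    by (rule char_vec_extreme_point_of_unit_cube) (auto simp: order_polytope_def)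
qed

section \<open>Convex subsets of the lifted diagonal\<close>

lemma Ints_affine_segment_imp_const:
  fixes c d :: real
  assumes "\<And>s. s \<in> {0..1} \<Longrightarrow> c + s * d \<in> \<int>"
  shows "d = 0"
proof (rule ccontr)
  assume "d \<noteq> 0"
  define s where "s = 1 / (2 * \<bar>d\<bar> + 2)"
  have "s \<in> {0..1}"
    by (simp add: s_def)
  then have "(c + s * d) - c \<in> \<int>"
    using assms[of s] assms[of 0] by (intro Ints_diff) auto
  moreover have "\<bar>s * d\<bar> < 1" "s * d \<noteq> 0"
    using \<open>d \<noteq> 0\<close> by (auto simp: s_def abs_mult field_simps)
  ultimately show False
    using Ints_nonzero_abs_less1 by force
qed

lemma convex_D_tor_lift_diff_eq:
  assumes "convex C" "C \<subseteq> D_tor_lift I" "p \<in> C" "q \<in> C" "i \<in> I \<longleftrightarrow> j \<in> I"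
  shows "(q - p) $ i = (q - p) $ j"
proof -
  have "(p $ i - p $ j) + s * ((q - p) $ i - (q - p) $ j) \<in> \<int>" if "s \<in> {0..1}" for s
  proof -
    have "(1 - s) *\<^sub>R p + s *\<^sub>R q \<in> D_tor_lift I"
      using convexD_alt[OF assms(1,3,4)] assms(2) that by auto
    then have "((1 - s) *\<^sub>R p + s *\<^sub>R q) $ i - ((1 - s) *\<^sub>R p + s *\<^sub>R q) $ j \<in> \<int>"
      using assms(5) by (simp add: D_tor_lift_def)
    then show ?thesis
      by (simp add: algebra_simps)
  qed
  then have "(q - p) $ i - (q - p) $ j = 0"
    by (rule Ints_affine_segment_imp_const)
  then show ?thesis
    by simp
qed

lemma convex_D_tor_lift_decomp:
  assumes "convex C" "C \<subseteq> D_tor_lift I" "p \<in> C" "q \<in> C" "i0 \<in> I" "j0 \<notin> I"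
  shows "q = p + ((q - p) $ i0) *\<^sub>R char_vec I + ((q - p) $ j0) *\<^sub>R char_vec (- I)"
proof (subst vec_eq_iff, intro allI)
  fix k
  have "(q - p) $ k = (q - p) $ (if k \<in> I then i0 else j0)"
    by (rule convex_D_tor_lift_diff_eq[OF assms(1-4)]) (simp add: assms(5,6))
  then show "q $ k = (p + ((q - p) $ i0) *\<^sub>R char_vec I + ((q - p) $ j0) *\<^sub>R char_vec (- I)) $ k"
    by (cases "k \<in> I") auto
qed

lemma aff_dim_insert3_le: "aff_dim {a, b, c :: 'a::euclidean_space} \<le> 2"
proof -
  have "aff_dim {a, b, c} \<le> int (card {a, b, c}) - 1"
    by (rule aff_dim_le_card) simp
  moreover have "card {a, b, c} \<le> 3"
    by (simp add: card_insert_if)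
  ultimately show ?thesis
    by linarith
qed

lemma aff_dim_convex_D_tor_lift_le:
  assumes "convex C" "C \<subseteq> D_tor_lift I" "I \<noteq> {}" "I \<noteq> UNIV"
  shows "aff_dim C \<le> 2"
proof (cases "C = {}")
  case False
  then obtain p where "p \<in> C" by blast
  obtain i0 j0 where "i0 \<in> I" "j0 \<notin> I"
    using assms(3,4) by blast
  define T where "T = {p, p + char_vec I, p + char_vec (- I)}"
  have "C \<subseteq> affine hull T"
  proof
    fix q assume "q \<in> C"
    define u w where "u = (q - p) $ i0" and "w = (q - p) $ j0"
    have "q = (1 - u - w) *\<^sub>R p + u *\<^sub>R (p + char_vec I) + w *\<^sub>R (p + char_vec (- I))"
      using convex_D_tor_lift_decomp[OF assms(1,2) \<open>p \<in> C\<close> \<open>q \<in> C\<close> \<open>i0 \<in> I\<close> \<open>j0 \<notin> I\<close>]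
      by (simp add: u_def w_def algebra_simps)
    then show "q \<in> affine hull T"
      unfolding T_def affine_hull_3 by (intro CollectI exI conjI) auto
  qed
  then have "aff_dim C \<le> aff_dim T"
    by (metis aff_dim_affine_hull aff_dim_subset)
  then show ?thesis
    using aff_dim_insert3_le[of p "p + char_vec I" "p + char_vec (- I)"] unfolding T_def by linarith
qed simp

section \<open>Up-sets give toric filters\<close>

lemma closure_if_ray_inside:
  fixes x v :: "'a::real_normed_vector"
  assumes "0 < t0" "\<And>t. 0 < t \<Longrightarrow> t < t0 \<Longrightarrow> x + t *\<^sub>R v \<in> S"
  shows "x \<in> closure S"
  unfolding closure_approachable
proof (intro allI impI)
  fix e :: real assume "0 < e"
  define t where "t = min (t0 / 2) (e / (2 * (norm v + 1)))"
  have "0 < norm v + 1"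
    using norm_ge_zero[of v] by linarith
  then have "0 < t" "t < t0"
    using \<open>0 < e\<close> assms(1) by (auto simp: t_def)
  moreover have "t * norm v < e"
  proof -
    have "t \<le> e / (2 * (norm v + 1))"
      by (simp add: t_def)
    then have "t * (norm v + 1) \<le> e / 2"
      using \<open>0 < norm v + 1\<close> by (simp add: field_simps)
    then show ?thesis
      using \<open>0 < t\<close> \<open>0 < e\<close> by (simp add: distrib_left)
  qed
  ultimately show "\<exists>y\<in>S. dist y x < e"
    using assms(2) by (intro bexI[of _ "x + t *\<^sub>R v"]) (auto simp: dist_norm)
qed

lemma two_level_vec_in_D_tor_lift: "a *\<^sub>R char_vec I + b *\<^sub>R char_vec (- I) \<in> D_tor_lift I"
  by (auto simp: D_tor_lift_def)

lemma two_level_vec_perturbation_in_toric_chamber_lift: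
  fixes E :: "('n::finite \<times> 'n) set"
  assumes "sym E" "admissible_height E g" "upward_closed (height_orientation E g) I"
    and "height_orientation E g \<in> toric_class \<omega>" "0 < t"
    and small: "\<And>k. \<bar>t * g k\<bar> < min b (min (a - b) (1 - a)) / 2"
  shows "a *\<^sub>R char_vec I + b *\<^sub>R char_vec (- I) + t *\<^sub>R (\<chi> k. g k) \<in> toric_chamber_lift E \<omega>"
proof -
  define y where "y = a *\<^sub>R char_vec I + b *\<^sub>R char_vec (- I) + t *\<^sub>R (\<chi> k. g k)"
  have y_nth: "y $ k = (if k \<in> I then a else b) + t * g k" for k
    by (simp add: y_def)
  have frac_y: "frac (y $ k) = y $ k" for k
    using small[of k] by (auto simp: y_nth frac_unique_iff abs_less_iff)
  have edge: "(y $ i < y $ j \<longleftrightarrow> g i < g j) \<and> y $ i \<noteq> y $ j" if "(i, j) \<in> E" for i j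
  proof -
    have "g i \<noteq> g j" "(j, i) \<in> E"
      using that assms(1,2) by (auto simp: admissible_height_def sym_def)
    moreover have "i \<in> I \<Longrightarrow> j \<notin> I \<Longrightarrow> \<not> g i < g j" "j \<in> I \<Longrightarrow> i \<notin> I \<Longrightarrow> \<not> g j < g i"
      using assms(3) that \<open>(j, i) \<in> E\<close> by (auto simp: upward_closed_def height_orientation_def)
    moreover have "t * g i < t * g j \<longleftrightarrow> g i < g j" "t * g i \<noteq> t * g j"
      using \<open>0 < t\<close> \<open>g i \<noteq> g j\<close> by simp_all
    ultimately show ?thesis
      using small[of i] small[of j] unfolding y_nth by (auto simp: abs_less_iff)
  qed
  have "point_orientation E y = height_orientation E g"
    using edge frac_y by (auto simp: point_orientation_def height_orientation_def)
  then show ?thesis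
    using assms(4) edge frac_y by (auto simp: toric_chamber_lift_def y_def[symmetric])
qed

lemma two_level_vec_in_closure_toric_chamber_lift:
  fixes E :: "('n::finite \<times> 'n) set"
  assumes "sym E" "admissible_height E g" "upward_closed (height_orientation E g) I"
    and "height_orientation E g \<in> toric_class \<omega>" "0 < b" "b < a" "a < 1"
  shows "a *\<^sub>R char_vec I + b *\<^sub>R char_vec (- I) \<in> closure (toric_chamber_lift E \<omega>)"
proof -
  define G :: "real ^ 'n" where "G = (\<chi> k. g k)"
  define m where "m = min b (min (a - b) (1 - a)) / 2"
  have "\<bar>t * g k\<bar> < m" if "0 < t" "t < m / (norm G + 1)" for t k
  proof -
    have "\<bar>t * g k\<bar> \<le> t * (norm G + 1)"
      using component_le_norm_cart[of G k] \<open>0 < t\<close> by (simp add: G_def abs_mult)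
    also have "\<dots> < m"
      using that norm_ge_zero[of G] by (simp add: pos_less_divide_eq)
    finally show ?thesis .
  qed
  then have "a *\<^sub>R char_vec I + b *\<^sub>R char_vec (- I) + t *\<^sub>R G \<in> toric_chamber_lift E \<omega>"
    if "0 < t" "t < m / (norm G + 1)" for t
    using two_level_vec_perturbation_in_toric_chamber_lift[OF assms(1-4)] that
    unfolding G_def m_def by blast
  moreover have "0 < m / (norm G + 1)"
    using assms(5-7) norm_ge_zero[of G] by (intro divide_pos_pos) (simp_all add: m_def add_nonneg_pos)
  ultimately show ?thesis
    by (intro closure_if_ray_inside[of "m / (norm G + 1)"]) auto
qed

lemma has_dim_2_if_upward_closed_in_toric_class:
  fixes E :: "('n::finite \<times> 'n) set"
  assumes "sym E" "irrefl E" "\<omega> \<in> Acyc E" "\<omega>' \<in> toric_class \<omega>" "upward_closed \<omega>' I"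
    and "I \<noteq> {}" "I \<noteq> UNIV"
  shows "has_dim (closure (toric_chamber_lift E \<omega>) \<inter> D_tor_lift I) 2"
proof -
  obtain g where g: "admissible_height E g" "\<omega>' = height_orientation E g"
    using toric_class_realizable[OF assms(1,2) Acyc_realizable[OF assms(3)] assms(4)]
    by (auto simp: realizable_orientations_def)
  obtain i0 j0 where "i0 \<in> I" "j0 \<notin> I"
    using assms(6,7) by blast
  define P where "P a b = a *\<^sub>R char_vec I + b *\<^sub>R char_vec (- I)" for a b :: real
  have P_nth: "P a b $ k = (if k \<in> I then a else b)" for a b k
    by (simp add: P_def)
  define K where "K = convex hull {P (1/2) (1/4), P (3/4) (1/4), P (3/4) (1/2)}"
  have "K \<subseteq> closure (toric_chamber_lift E \<omega>) \<inter> D_tor_lift I"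
  proof
    fix z assume "z \<in> K"
    then obtain u v w where uvw: "0 \<le> u" "0 \<le> v" "0 \<le> w" "u + v + w = 1"
      and "z = u *\<^sub>R P (1/2) (1/4) + v *\<^sub>R P (3/4) (1/4) + w *\<^sub>R P (3/4) (1/2)"
      unfolding K_def convex_hull_3 by blast
    then have "z = P (u / 2 + 3 * v / 4 + 3 * w / 4) (u / 4 + v / 4 + w / 2)"
      by (simp add: P_def algebra_simps)
    moreover have "P a b \<in> closure (toric_chamber_lift E \<omega>)" if "0 < b" "b < a" "a < 1" for a b
      unfolding P_def using two_level_vec_in_closure_toric_chamber_lift[OF assms(1) g(1)] assms(4,5) g(2) that
      by blast
    ultimately show "z \<in> closure (toric_chamber_lift E \<omega>) \<inter> D_tor_lift I"
      using uvw by (auto simp: P_def two_level_vec_in_D_tor_lift)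
  qed
  moreover have "aff_dim K = 2"
  proof -
    have "\<not> collinear {P (1/2) (1/4), P (3/4) (1/4), P (3/4) (1/2)}"
    proof
      assume "collinear {P (1/2) (1/4), P (3/4) (1/4), P (3/4) (1/2)}"
      moreover have "P (1/2) (1/4) $ i0 \<noteq> P (3/4) (1/2) $ i0"
        using \<open>i0 \<in> I\<close> by (simp add: P_nth)
      ultimately obtain u where "P (3/4) (1/4) = u *\<^sub>R P (1/2) (1/4) + (1 - u) *\<^sub>R P (3/4) (1/2)"
        by (auto simp: collinear_3_expand)
      from arg_cong[OF this, of "\<lambda>x. x $ i0"] arg_cong[OF this, of "\<lambda>x. x $ j0"] show False
        using \<open>i0 \<in> I\<close> \<open>j0 \<notin> I\<close> by (simp add: P_nth field_simps)
    qed
    then have "aff_dim {P (1/2) (1/4), P (3/4) (1/4), P (3/4) (1/2)} = 2"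
      using aff_dim_insert3_le[of "P (1/2) (1/4)" "P (3/4) (1/4)" "P (3/4) (1/2)"]
      unfolding collinear_aff_dim by linarith
    then show ?thesis
      by (simp add: K_def aff_dim_convex_hull)
  qed
  moreover have "aff_dim C \<le> 2" if "convex C" "C \<subseteq> closure (toric_chamber_lift E \<omega>) \<inter> D_tor_lift I" for C
    using aff_dim_convex_D_tor_lift_le[OF that(1) _ assms(6,7)] that(2) by blast
  ultimately show ?thesis
    unfolding has_dim_def by (metis convex_convex_hull K_def)
qed

section \<open>Toric filters give up-sets\<close>

lemma exists_params_avoiding_Ints:
  fixes T :: "(real \<times> real \<times> real) set"
  assumes "finite T" "\<And>\<alpha> \<beta> \<gamma>. (\<alpha>, \<beta>, \<gamma>) \<in> T \<Longrightarrow> \<alpha> \<noteq> 0 \<or> \<beta> \<noteq> 0"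
  obtains s c where "0 < s" "s < 1/2" "0 < c" "c < 1/2"
    "\<And>\<alpha> \<beta> \<gamma>. (\<alpha>, \<beta>, \<gamma>) \<in> T \<Longrightarrow> \<gamma> + s * (\<alpha> + c * \<beta>) \<notin> \<int>"
proof -
  have "countable {c. \<alpha> + c * \<beta> = 0}" if "(\<alpha>, \<beta>, \<gamma>) \<in> T" for \<alpha> \<beta> \<gamma>
  proof (cases "\<beta> = 0")
    case False
    then have "{c. \<alpha> + c * \<beta> = 0} \<subseteq> {- \<alpha> / \<beta>}"
      by (auto simp: field_simps)
    then show ?thesis
      by (rule countable_subset) simp
  qed (use assms(2) that in auto)
  then have "countable (\<Union>(\<alpha>, \<beta>, \<gamma>)\<in>T. {c. \<alpha> + c * \<beta> = 0})"
    using assms(1) by (intro countable_UN) (auto intro: countable_finite)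
  from real_interval_avoid_countable_set[OF _ this, of 0 "1/2"]
  obtain c where "0 < c" "c < 1/2" and c_avoids: "c \<notin> (\<Union>(\<alpha>, \<beta>, \<gamma>)\<in>T. {c. \<alpha> + c * \<beta> = 0})"
    by auto
  have c_nonzero: "\<alpha> + c * \<beta> \<noteq> 0" if "(\<alpha>, \<beta>, \<gamma>) \<in> T" for \<alpha> \<beta> \<gamma>
    using c_avoids that by force
  have "countable {s. \<gamma> + s * (\<alpha> + c * \<beta>) \<in> \<int>}" if "(\<alpha>, \<beta>, \<gamma>) \<in> T" for \<alpha> \<beta> \<gamma>
  proof -
    have "{s. \<gamma> + s * (\<alpha> + c * \<beta>) \<in> \<int>} \<subseteq> (\<lambda>n. (n - \<gamma>) / (\<alpha> + c * \<beta>)) ` \<int>"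
    proof
      fix s assume "s \<in> {s. \<gamma> + s * (\<alpha> + c * \<beta>) \<in> \<int>}"
      moreover have "s = ((\<gamma> + s * (\<alpha> + c * \<beta>)) - \<gamma>) / (\<alpha> + c * \<beta>)"
        using c_nonzero[OF that] by simp
      ultimately show "s \<in> (\<lambda>n. (n - \<gamma>) / (\<alpha> + c * \<beta>)) ` \<int>"
        by (intro image_eqI) auto
    qed
    then show ?thesis
      using countable_int by (rule countable_subset[OF _ countable_image])
  qed
  then have "countable (\<Union>(\<alpha>, \<beta>, \<gamma>)\<in>T. {s. \<gamma> + s * (\<alpha> + c * \<beta>) \<in> \<int>})"
    using assms(1) by (intro countable_UN) (auto intro: countable_finite)
  from real_interval_avoid_countable_set[OF _ this, of 0 "1/2"]
  obtain s where "0 < s" "s < 1/2"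
    and s_avoids: "s \<notin> (\<Union>(\<alpha>, \<beta>, \<gamma>)\<in>T. {s. \<gamma> + s * (\<alpha> + c * \<beta>) \<in> \<int>})"
    by auto
  have "\<gamma> + s * (\<alpha> + c * \<beta>) \<notin> \<int>" if "(\<alpha>, \<beta>, \<gamma>) \<in> T" for \<alpha> \<beta> \<gamma>
    using s_avoids that by force
  with \<open>0 < s\<close> \<open>s < 1/2\<close> \<open>0 < c\<close> \<open>c < 1/2\<close> show ?thesis
    using that by blast
qed

lemma plane_coords_nonzero_if_not_collinear:
  fixes p e f :: "'a::real_vector"
  assumes "\<not> collinear {p, p + x1 *\<^sub>R e + y1 *\<^sub>R f, p + x2 *\<^sub>R e + y2 *\<^sub>R f}" "\<alpha> \<noteq> 0 \<or> \<beta> \<noteq> 0"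
  shows "\<alpha> * x1 + \<beta> * y1 \<noteq> 0 \<or> \<alpha> * x2 + \<beta> * y2 \<noteq> 0"
proof (rule ccontr)
  assume "\<not> ?thesis"
  then have zero: "\<alpha> * x1 + \<beta> * y1 = 0" "\<alpha> * x2 + \<beta> * y2 = 0"
    by auto
  obtain v where "\<And>x y. \<alpha> * x + \<beta> * y = 0 \<Longrightarrow> \<exists>t. x *\<^sub>R e + y *\<^sub>R f = t *\<^sub>R v"
  proof (cases "\<alpha> = 0")
    case True
    with assms(2) show ?thesis
      by (intro that[of e]) (auto intro: exI[of _ x for x])
  next
    case False
    show ?thesis
    proof (intro that[of "f - (\<beta> / \<alpha>) *\<^sub>R e"] exI)
      fix x y assume "\<alpha> * x + \<beta> * y = 0"
      then have "x = - (\<beta> / \<alpha>) * y"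
        using False by (simp add: field_simps)
      then show "x *\<^sub>R e + y *\<^sub>R f = y *\<^sub>R (f - (\<beta> / \<alpha>) *\<^sub>R e)"
        by (simp add: algebra_simps)
    qed
  qed
  with zero have "collinear {p, p + x1 *\<^sub>R e + y1 *\<^sub>R f, p + x2 *\<^sub>R e + y2 *\<^sub>R f}"
    unfolding collinear_alt by (intro exI[of _ p] exI[of _ v]) (auto intro: exI[of _ 0])
  with assms(1) show False ..
qed

lemma aff_dim_2_obtains_not_collinear:
  fixes C :: "'a::euclidean_space set"
  assumes "aff_dim C = 2"
  obtains p q r where "p \<in> C" "q \<in> C" "r \<in> C" "\<not> collinear {p, q, r}"
proof -
  obtain B where "B \<subseteq> C" "\<not> affine_dependent B" "of_nat (card B) = aff_dim C + 1"
    using aff_dim_inner_basis_exists by blast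
  with assms show ?thesis
    using that by (auto simp: card_3_iff collinear_3_eq_affine_dependent)
qed

lemma convex_D_tor_lift_generic_point:
  fixes C :: "(real ^ 'n::finite) set"
  assumes "convex C" "C \<subseteq> D_tor_lift I" "aff_dim C = 2" "i0 \<in> I" "j0 \<notin> I"
  obtains z where "z \<in> C" "z $ i0 \<notin> \<int>" "z $ j0 \<notin> \<int>" "z $ i0 - z $ j0 \<notin> \<int>"
proof -
  obtain p q r where "p \<in> C" "q \<in> C" "r \<in> C" and "\<not> collinear {p, q, r}"
    using aff_dim_2_obtains_not_collinear[OF assms(3)] by blast
  define x1 y1 x2 y2 where "x1 = (q - p) $ i0" and "y1 = (q - p) $ j0"
    and "x2 = (r - p) $ i0" and "y2 = (r - p) $ j0"
  have "q = p + x1 *\<^sub>R char_vec I + y1 *\<^sub>R char_vec (- I)"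
    "r = p + x2 *\<^sub>R char_vec I + y2 *\<^sub>R char_vec (- I)"
    unfolding x1_def y1_def x2_def y2_def
    using convex_D_tor_lift_decomp[OF assms(1,2) \<open>p \<in> C\<close> _ assms(4,5)] \<open>q \<in> C\<close> \<open>r \<in> C\<close> by blast+
  then have nondeg: "\<alpha> * x1 + \<beta> * y1 \<noteq> 0 \<or> \<alpha> * x2 + \<beta> * y2 \<noteq> 0" if "\<alpha> \<noteq> 0 \<or> \<beta> \<noteq> 0" for \<alpha> \<beta>
    using plane_coords_nonzero_if_not_collinear \<open>\<not> collinear {p, q, r}\<close> that by metis
  \<comment> \<open>the coordinates i0, j0 of a point of the triangle pqr, and their difference, are non-constant affine functions\<close>
  let ?T = "{(x1, x2, p $ i0), (y1, y2, p $ j0), (x1 - y1, x2 - y2, p $ i0 - p $ j0)}"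
  have "\<alpha> \<noteq> 0 \<or> \<beta> \<noteq> 0" if "(\<alpha>, \<beta>, \<gamma>) \<in> ?T" for \<alpha> \<beta> \<gamma>
    using that nondeg[of 1 0] nondeg[of 0 1] nondeg[of 1 "-1"] by auto
  with exists_params_avoiding_Ints[of ?T] obtain s c where "0 < s" "s < 1/2" "0 < c" "c < 1/2"
    and avoid: "\<And>\<alpha> \<beta> \<gamma>. (\<alpha>, \<beta>, \<gamma>) \<in> ?T \<Longrightarrow> \<gamma> + s * (\<alpha> + c * \<beta>) \<notin> \<int>"
    by blast
  define z where "z = p + s *\<^sub>R (q - p) + (s * c) *\<^sub>R (r - p)"
  have "s * c \<le> s"
    using \<open>0 < s\<close> \<open>c < 1/2\<close> by simp
  then have "s + s * c \<le> 1"
    using \<open>s < 1/2\<close> by linarith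
  moreover have "0 \<le> s" "0 \<le> s * c"
    using \<open>0 < s\<close> \<open>0 < c\<close> by auto
  ultimately have "z \<in> convex hull {p, q, r}"
    unfolding z_def convex_hull_3_alt by blast
  moreover have "convex hull {p, q, r} \<subseteq> C"
    using \<open>p \<in> C\<close> \<open>q \<in> C\<close> \<open>r \<in> C\<close> assms(1) by (simp add: hull_minimal)
  ultimately have "z \<in> C"
    by blast
  have z_nth: "z $ k = p $ k + s * ((q - p) $ k + c * (r - p) $ k)" for k
    by (simp add: z_def algebra_simps)
  have "z $ i0 \<notin> \<int>" "z $ j0 \<notin> \<int>" "z $ i0 - z $ j0 \<notin> \<int>"
    using avoid[of x1 x2 "p $ i0"] avoid[of y1 y2 "p $ j0"] avoid[of "x1 - y1" "x2 - y2" "p $ i0 - p $ j0"]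
    unfolding z_nth x1_def x2_def y1_def y2_def by (simp_all add: algebra_simps)
  with \<open>z \<in> C\<close> show ?thesis
    by (rule that)
qed

lemma frac_dist_less:
  fixes x y d :: real
  assumes "\<bar>y - x\<bar> < d" "d \<le> frac x" "d \<le> 1 - frac x"
  shows "\<bar>frac y - frac x\<bar> < d"
proof -
  have "\<lfloor>y\<rfloor> = \<lfloor>x\<rfloor>"
    using assms unfolding floor_eq_iff frac_def by (auto simp: abs_less_iff)
  then show ?thesis
    using assms(1) by (simp add: frac_def)
qed

lemma closure_toric_chamber_lift_approx:
  fixes E :: "('n::finite \<times> 'n) set"
  assumes "z \<in> closure (toric_chamber_lift E \<omega>)" "0 < \<delta>"
    and "\<And>k. \<delta> \<le> frac (z $ k) \<and> \<delta> \<le> 1 - frac (z $ k)"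
  obtains g where "admissible_height E g" "height_orientation E g \<in> toric_class \<omega>"
    "\<And>k. \<bar>g k - frac (z $ k)\<bar> < \<delta>"
proof -
  obtain y where y: "y \<in> toric_chamber_lift E \<omega>" "dist y z < \<delta>"
    using assms(1,2) by (auto simp: closure_approachable)
  define g where "g k = frac (y $ k)" for k
  have "admissible_height E g"
    unfolding admissible_height_def
  proof (intro allI impI conjI)
    fix i j assume "(i, j) \<in> E"
    then show "g i \<noteq> g j"
      using y(1) by (simp add: toric_chamber_lift_def g_def)
    show "\<bar>g i - g j\<bar> < 1"
      using frac_lt_1[of "y $ i"] frac_lt_1[of "y $ j"] frac_ge_0[of "y $ i"] frac_ge_0[of "y $ j"]
      unfolding g_def abs_less_iff by linarith
  qed
  moreover have "height_orientation E g \<in> toric_class \<omega>"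
    using y(1) by (simp add: toric_chamber_lift_def point_orientation_def height_orientation_def g_def)
  moreover have "\<bar>g k - frac (z $ k)\<bar> < \<delta>" for k
  proof -
    have "\<bar>y $ k - z $ k\<bar> < \<delta>"
      using component_le_norm_cart[of "y - z" k] y(2) by (simp add: dist_norm)
    then show ?thesis
      unfolding g_def using frac_dist_less assms(3) by blast
  qed
  ultimately show ?thesis
    using that by blast
qed

lemma exists_upward_closed_in_toric_class:
  fixes E :: "('n::finite \<times> 'n) set"
  assumes "sym E" "irrefl E" "admissible_height E g" "height_orientation E g \<in> toric_class \<omega>"
    and "(\<forall>i j. (i, j) \<in> E \<longrightarrow> i \<in> I \<longrightarrow> j \<notin> I \<longrightarrow> g j < g i) \<or>
         (\<forall>i j. (i, j) \<in> E \<longrightarrow> i \<in> I \<longrightarrow> j \<notin> I \<longrightarrow> g i < g j)"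
  shows "\<exists>\<omega>' \<in> toric_class \<omega>. upward_closed \<omega>' I"
  using assms(5)
proof
  assume "\<forall>i j. (i, j) \<in> E \<longrightarrow> i \<in> I \<longrightarrow> j \<notin> I \<longrightarrow> g j < g i"
  then have "upward_closed (height_orientation E g) I"
    by (fastforce simp: upward_closed_def height_orientation_def)
  with assms(4) show ?thesis ..
next
  assume "\<forall>i j. (i, j) \<in> E \<longrightarrow> i \<in> I \<longrightarrow> j \<notin> I \<longrightarrow> g i < g j"
  then have "(height_orientation E g, height_orientation E (\<lambda>k. g k + indicator I k)) \<in> source_sink_step\<^sup>*"
    by (intro source_sink_steps_lift[OF assms(1-3)]) blast
  then have "height_orientation E (\<lambda>k. g k + indicator I k) \<in> toric_class \<omega>"
    by (rule toric_class_source_sink_steps[OF assms(4)])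
  moreover have "upward_closed (height_orientation E (\<lambda>k. g k + indicator I k)) I"
    unfolding upward_closed_def height_orientation_def
  proof (clarify, rule ccontr)
    fix i j assume "(i, j) \<in> E" "g i + indicator I i < g j + indicator I j" "i \<in> I" "j \<notin> I"
    moreover have "\<bar>g i - g j\<bar> < 1"
      using assms(3) \<open>(i, j) \<in> E\<close> by (simp add: admissible_height_def)
    ultimately show False
      by (simp add: abs_less_iff)
  qed
  ultimately show ?thesis ..
qed

lemma upward_closed_in_toric_class_if_has_dim_2:
  fixes E :: "('n::finite \<times> 'n) set"
  assumes "sym E" "irrefl E" "I \<noteq> {}" "I \<noteq> UNIV"
    and "has_dim (closure (toric_chamber_lift E \<omega>) \<inter> D_tor_lift I) 2"
  shows "\<exists>\<omega>' \<in> toric_class \<omega>. upward_closed \<omega>' I"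
proof -
  obtain C where C: "convex C" "C \<subseteq> closure (toric_chamber_lift E \<omega>) \<inter> D_tor_lift I" "aff_dim C = 2"
    using assms(5) by (auto simp: has_dim_def)
  obtain i0 j0 where "i0 \<in> I" "j0 \<notin> I"
    using assms(3,4) by blast
  obtain z where "z \<in> C" "z $ i0 \<notin> \<int>" "z $ j0 \<notin> \<int>" "z $ i0 - z $ j0 \<notin> \<int>"
    using convex_D_tor_lift_generic_point[OF C(1) _ C(3) \<open>i0 \<in> I\<close> \<open>j0 \<notin> I\<close>] C(2) by blast
  then have z: "z \<in> closure (toric_chamber_lift E \<omega>)" "z \<in> D_tor_lift I"
    using C(2) by auto
  define \<alpha> \<beta> where "\<alpha> = frac (z $ i0)" and "\<beta> = frac (z $ j0)"
  have frac_z: "frac (z $ k) = (if k \<in> I then \<alpha> else \<beta>)" for k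
    using z(2) \<open>i0 \<in> I\<close> \<open>j0 \<notin> I\<close> frac_diff_zero[of "z $ k"]
    by (auto simp: D_tor_lift_def \<alpha>_def \<beta>_def)
  have "0 < \<alpha>" "\<alpha> < 1" "0 < \<beta>" "\<beta> < 1" "\<alpha> \<noteq> \<beta>"
    using \<open>z $ i0 \<notin> \<int>\<close> \<open>z $ j0 \<notin> \<int>\<close> \<open>z $ i0 - z $ j0 \<notin> \<int>\<close> frac_diff_eq[of "z $ i0" "z $ j0"]
    by (auto simp: \<alpha>_def \<beta>_def frac_lt_1)
  \<comment> \<open>within distance \<open>\<delta>\<close> of z, frac does not wrap around and the two levels stay apart\<close>
  define \<delta> where "\<delta> = min (min \<alpha> (1 - \<alpha>)) (min (min \<beta> (1 - \<beta>)) (\<bar>\<alpha> - \<beta>\<bar> / 2))"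
  have "0 < \<delta>"
    using \<open>0 < \<alpha>\<close> \<open>\<alpha> < 1\<close> \<open>0 < \<beta>\<close> \<open>\<beta> < 1\<close> \<open>\<alpha> \<noteq> \<beta>\<close> by (simp add: \<delta>_def)
  moreover have "\<delta> \<le> frac (z $ k) \<and> \<delta> \<le> 1 - frac (z $ k)" for k
    by (simp add: frac_z \<delta>_def min_le_iff_disj)
  ultimately obtain g where g: "admissible_height E g" "height_orientation E g \<in> toric_class \<omega>"
    and "\<And>k. \<bar>g k - frac (z $ k)\<bar> < \<delta>"
    using closure_toric_chamber_lift_approx[OF z(1)] by blast
  then have near: "\<bar>g k - (if k \<in> I then \<alpha> else \<beta>)\<bar> < \<delta>" for k
    by (simp only: frac_z)
  have "\<delta> \<le> \<bar>\<alpha> - \<beta>\<bar> / 2"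
    unfolding \<delta>_def by (intro min.coboundedI2 min.cobounded2)
  then have cut: "if \<beta> < \<alpha> then g j < g i else g i < g j" if "i \<in> I" "j \<notin> I" for i j
    using near[of i] near[of j] that \<open>\<alpha> \<noteq> \<beta>\<close> by (auto simp: abs_less_iff)
  have "(\<forall>i j. (i, j) \<in> E \<longrightarrow> i \<in> I \<longrightarrow> j \<notin> I \<longrightarrow> g j < g i) \<or>
        (\<forall>i j. (i, j) \<in> E \<longrightarrow> i \<in> I \<longrightarrow> j \<notin> I \<longrightarrow> g i < g j)"
    using cut by (cases "\<beta> < \<alpha>") auto
  then show ?thesis
    by (rule exists_upward_closed_in_toric_class[OF assms(1,2) g])
qed

theorem mainTheorem13:
  fixes E :: "('n::finite \<times> 'n) set" and \<omega> :: "('n \<times> 'n) set" and I :: "'n set"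
  assumes "simple_graph E" and "\<omega> \<in> Acyc E"
  shows "toric_filter E \<omega> I \<longleftrightarrow>
         (\<exists>\<omega>' \<in> toric_class \<omega>. char_vec I extreme_point_of order_polytope \<omega>')"
proof -
  have E: "sym E" "irrefl E"
    using assms(1) by (auto simp: simple_graph_def)
  have "toric_filter E \<omega> I \<longleftrightarrow> (\<exists>\<omega>' \<in> toric_class \<omega>. upward_closed \<omega>' I)"
  proof (cases "I = {} \<or> I = UNIV")
    case True
    then have "\<omega> \<in> toric_class \<omega>" "upward_closed \<omega> I"
      by (auto simp: toric_class_def upward_closed_def)
    with True show ?thesis
      by (auto simp: toric_filter_def)
  next
    case False
    then have I: "I \<noteq> {}" "I \<noteq> UNIV"
      by auto
    show ?thesis
      using I has_dim_2_if_upward_closed_in_toric_class[OF E assms(2) _ _ I]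
        upward_closed_in_toric_class_if_has_dim_2[OF E I]
      unfolding toric_filter_def by blast
  qed
  then show ?thesis
    by (simp add: char_vec_extreme_point_of_order_polytope_iff)
qed

end
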